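(* Let $A$ be the weighted shift on $\mathcal{H}$ with weights $\{1/n\}_{n\ge1}$. Then for all $t>0$ and $r>0$, \[\frac{\sqrt6}{\pi r}(e^{rt}-1)\le\Bigl\|\Bigl(\frac1t-rA\Bigr)^{-1}\Bigr\|\le te^{rt}.\]
   Context: $\mathcal{H}$ is a separable infinite-dimensional complex Hilbert space with orthonormal basis $\{e_n\}_{n=0}^\infty$, and $A$ is defined by $Ae_n=\frac{1}{n+1}e_{n+1}$ for $n\ge0$ (so its matrix has subdiagonal entries $1,\frac12,\frac13,\dots$). *)

theory Defs
  imports "HOL-Analysis.Analysis"
begin

text \<open>Concrete model of the separable complex Hilbert space: square-summable
complex sequences, with e_n the n-th unit sequence.\<close>

definition ell2 :: "(nat \<Rightarrow> complex) set" where
  "ell2 = {x. summable (\<lambda>n. (cmod (x n))^2)}"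

definition l2norm :: "(nat \<Rightarrow> complex) \<Rightarrow> real" where
  "l2norm x = sqrt (\<Sum>n. (cmod (x n))^2)"

text \<open>Weighted shift: A e_n = e_(n+1) / (n+1), i.e. (A x)_0 = 0, (A x)_m = x_(m-1) / m.\<close>

definition wshift :: "(nat \<Rightarrow> complex) \<Rightarrow> nat \<Rightarrow> complex" where
  "wshift x m = (if m = 0 then 0 else x (m - 1) / of_nat m)"

definition opnorm_l2 :: "((nat \<Rightarrow> complex) \<Rightarrow> nat \<Rightarrow> complex) \<Rightarrow> real" where
  "opnorm_l2 S = Sup {l2norm (S x) | x. x \<in> ell2 \<and> l2norm x \<le> 1}"

end

theory Submission
  imports Defs
begin

(* The operator 1/t - rA is lower triangular, and its inverse t \<Sum>\<^sub>k (rtA)\<^sup>k is computed by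
   forward substitution. Since A\<^sup>k e\<^sub>j = j!/(j+k)! e\<^sub>j\<^sub>+\<^sub>k and j!/(j+k)! \<le> 1/k!, the inverse is
   dominated entrywise by convolution with the sequence t (rt)\<^sup>k/k!, whose sum is t e\<^sup>r\<^sup>t; Young's
   inequality for convolution on l1 * l2 then bounds the norm by t e\<^sup>r\<^sup>t.
   For the lower bound, the inverse maps e\<^sub>0 to (t (rt)\<^sup>m/m!)\<^sub>m; pairing it with (1/(m+1))\<^sub>m,
   whose norm is \<pi>/sqrt 6, gives (e\<^sup>r\<^sup>t - 1)/r, and Cauchy-Schwarz does the rest. *)

lemma weighted_Cauchy_Schwarz_sum:
  fixes c a :: "'a \<Rightarrow> real"
  assumes "\<And>i. i \<in> I \<Longrightarrow> c i \<ge> 0"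
  shows "(\<Sum>i\<in>I. c i * a i)\<^sup>2 \<le> (\<Sum>i\<in>I. c i) * (\<Sum>i\<in>I. c i * (a i)\<^sup>2)"
proof -
  have "(\<Sum>i\<in>I. sqrt (c i) * (sqrt (c i) * a i))\<^sup>2
      \<le> (\<Sum>i\<in>I. (sqrt (c i))\<^sup>2) * (\<Sum>i\<in>I. (sqrt (c i) * a i)\<^sup>2)"
    by (rule Cauchy_Schwarz_ineq_sum)
  also have "(\<Sum>i\<in>I. sqrt (c i) * (sqrt (c i) * a i)) = (\<Sum>i\<in>I. c i * a i)"
    using assms by (intro sum.cong) (auto simp: mult.assoc[symmetric])
  also have "(\<Sum>i\<in>I. (sqrt (c i))\<^sup>2) = (\<Sum>i\<in>I. c i)"
    using assms by (intro sum.cong) auto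
  also have "(\<Sum>i\<in>I. (sqrt (c i) * a i)\<^sup>2) = (\<Sum>i\<in>I. c i * (a i)\<^sup>2)"
    using assms by (intro sum.cong) (auto simp: power_mult_distrib)
  finally show ?thesis .
qed

lemma convolution_l2_bound:
  fixes c a :: "nat \<Rightarrow> real"
  assumes c_nonneg: "\<And>k. c k \<ge> 0" and c_sums: "c sums C"
    and a_sq: "summable (\<lambda>j. (a j)\<^sup>2)"
  shows "summable (\<lambda>m. (\<Sum>j\<le>m. c (m - j) * a j)\<^sup>2)"
    and "(\<Sum>m. (\<Sum>j\<le>m. c (m - j) * a j)\<^sup>2) \<le> C\<^sup>2 * (\<Sum>j. (a j)\<^sup>2)"
proof -
  define conv where "conv m = (\<Sum>j\<le>m. c (m - j) * a j)" for m
  define cprod where "cprod m = (\<Sum>j\<le>m. (a j)\<^sup>2 * c (m - j))" for m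
  have c_partial: "(\<Sum>j\<le>m. c (m - j)) \<le> C" for m
  proof -
    have "(\<Sum>j\<le>m. c (m - j)) = (\<Sum>k\<le>m. c k)"
      using sum.atLeastAtMost_rev[of "\<lambda>j. c (m - j)" 0 m] by (simp add: atLeast0AtMost)
    also have "\<dots> \<le> C"
      using sum_le_suminf[OF sums_summable[OF c_sums]] c_nonneg sums_unique[OF c_sums] by auto
    finally show ?thesis .
  qed
  have conv_le: "(conv m)\<^sup>2 \<le> C * cprod m" for m
  proof -
    have "(conv m)\<^sup>2 \<le> (\<Sum>j\<le>m. c (m - j)) * (\<Sum>j\<le>m. c (m - j) * (a j)\<^sup>2)"
      unfolding conv_def by (rule weighted_Cauchy_Schwarz_sum) (rule c_nonneg)
    also have "(\<Sum>j\<le>m. c (m - j) * (a j)\<^sup>2) = cprod m"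
      by (simp add: cprod_def mult.commute)
    also have "(\<Sum>j\<le>m. c (m - j)) * cprod m \<le> C * cprod m"
      unfolding cprod_def using c_partial c_nonneg by (intro mult_right_mono sum_nonneg) auto
    finally show ?thesis .
  qed
  have "cprod sums (C * (\<Sum>j. (a j)\<^sup>2))"
    unfolding cprod_def sums_unique[OF c_sums]
    using Cauchy_product_sums[of "\<lambda>j. (a j)\<^sup>2" c] a_sq sums_summable[OF c_sums] c_nonneg
    by (simp add: mult.commute)
  from sums_mult[OF this, of C]
  have cprod_sums: "(\<lambda>m. C * cprod m) sums (C\<^sup>2 * (\<Sum>j. (a j)\<^sup>2))"
    by (simp add: power2_eq_square mult.assoc)
  have conv_summable: "summable (\<lambda>m. (conv m)\<^sup>2)"
    by (rule summable_comparison_test'[OF sums_summable[OF cprod_sums]]) (use conv_le in simp)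
  then show "summable (\<lambda>m. (\<Sum>j\<le>m. c (m - j) * a j)\<^sup>2)"
    by (simp add: conv_def)
  have "(\<Sum>m. (conv m)\<^sup>2) \<le> C\<^sup>2 * (\<Sum>j. (a j)\<^sup>2)"
    using suminf_le[OF conv_le conv_summable sums_summable[OF cprod_sums]]
      sums_unique[OF cprod_sums] by simp
  then show "(\<Sum>m. (\<Sum>j\<le>m. c (m - j) * a j)\<^sup>2) \<le> C\<^sup>2 * (\<Sum>j. (a j)\<^sup>2)"
    by (simp add: conv_def)
qed

lemma sums_Cauchy_Schwarz:
  fixes v b :: "nat \<Rightarrow> real"
  assumes v_sq: "summable (\<lambda>m. (v m)\<^sup>2)" and b_sq: "summable (\<lambda>m. (b m)\<^sup>2)"
    and vb_sums: "(\<lambda>m. v m * b m) sums s"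
  shows "s\<^sup>2 \<le> (\<Sum>m. (v m)\<^sup>2) * (\<Sum>m. (b m)\<^sup>2)"
proof (rule LIMSEQ_le_const2)
  show "(\<lambda>N. (\<Sum>m<N. v m * b m)\<^sup>2) \<longlonglongrightarrow> s\<^sup>2"
    using vb_sums by (intro tendsto_power) (simp add: sums_def)
  show "\<exists>N0. \<forall>N\<ge>N0. (\<Sum>m<N. v m * b m)\<^sup>2 \<le> (\<Sum>m. (v m)\<^sup>2) * (\<Sum>m. (b m)\<^sup>2)"
  proof (intro exI allI impI)
    fix N
    have "(\<Sum>m<N. v m * b m)\<^sup>2 \<le> (\<Sum>m<N. (v m)\<^sup>2) * (\<Sum>m<N. (b m)\<^sup>2)"
      by (rule Cauchy_Schwarz_ineq_sum)
    also have "\<dots> \<le> (\<Sum>m. (v m)\<^sup>2) * (\<Sum>m. (b m)\<^sup>2)"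
      using v_sq b_sq by (intro mult_mono sum_le_suminf suminf_nonneg sum_nonneg) auto
    finally show "(\<Sum>m<N. v m * b m)\<^sup>2 \<le> (\<Sum>m. (v m)\<^sup>2) * (\<Sum>m. (b m)\<^sup>2)" .
  qed
qed

lemma exp_minus_one_div_sums:
  fixes x :: real
  assumes "x \<noteq> 0"
  shows "(\<lambda>n. x ^ n / fact (Suc n)) sums ((exp x - 1) / x)"
proof -
  have "(\<lambda>n. x ^ n / fact n) sums exp x"
    using exp_converges[of x] by (simp add: divide_inverse_commute)
  then have "(\<lambda>n. x ^ Suc n / fact (Suc n)) sums (exp x - 1)"
    by (subst sums_Suc_iff) simp
  then have "(\<lambda>n. x ^ Suc n / fact (Suc n) / x) sums ((exp x - 1) / x)"
    by (rule sums_divide)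
  then show ?thesis
    using assms by simp
qed

lemma l2norm_nonneg: "x \<in> ell2 \<Longrightarrow> l2norm x \<ge> 0"
  unfolding ell2_def l2norm_def by (simp add: suminf_nonneg)

lemma ell2_dominated:
  assumes "\<And>m. cmod (y m) \<le> w m" and "summable (\<lambda>m. (w m)\<^sup>2)"
  shows "y \<in> ell2" and "l2norm y \<le> sqrt (\<Sum>m. (w m)\<^sup>2)"
proof -
  have sq_le: "(cmod (y m))\<^sup>2 \<le> (w m)\<^sup>2" for m
    using assms(1) by (intro power_mono) auto
  have "summable (\<lambda>m. (cmod (y m))\<^sup>2)"
    by (rule summable_comparison_test'[OF assms(2)]) (use sq_le in simp)
  then show "y \<in> ell2" and "l2norm y \<le> sqrt (\<Sum>m. (w m)\<^sup>2)"
    unfolding ell2_def l2norm_def using sq_le assms(2)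
    by (auto intro: real_sqrt_le_mono suminf_le)
qed

lemma l2norm_ge_sums:
  fixes b :: "nat \<Rightarrow> real"
  assumes "y \<in> ell2" and "summable (\<lambda>m. (b m)\<^sup>2)" and "(\<lambda>m. cmod (y m) * b m) sums s"
  shows "s \<le> l2norm y * sqrt (\<Sum>m. (b m)\<^sup>2)"
proof -
  have "s\<^sup>2 \<le> (\<Sum>m. (cmod (y m))\<^sup>2) * (\<Sum>m. (b m)\<^sup>2)"
    using assms by (intro sums_Cauchy_Schwarz) (auto simp: ell2_def)
  then have "s \<le> sqrt ((\<Sum>m. (cmod (y m))\<^sup>2) * (\<Sum>m. (b m)\<^sup>2))"
    by (rule real_le_rsqrt)
  then show ?thesis
    by (simp add: l2norm_def real_sqrt_mult)
qed

lemma opnorm_l2_le: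
  assumes "C \<ge> 0" and "\<forall>x\<in>ell2. l2norm (S x) \<le> C * l2norm x"
  shows "opnorm_l2 S \<le> C"
  unfolding opnorm_l2_def
proof (rule cSup_least)
  have "(\<lambda>_. 0) \<in> ell2" by (simp add: ell2_def)
  then show "{l2norm (S x) |x. x \<in> ell2 \<and> l2norm x \<le> 1} \<noteq> {}"
    by (auto simp: l2norm_def)
next
  fix y assume "y \<in> {l2norm (S x) |x. x \<in> ell2 \<and> l2norm x \<le> 1}"
  then obtain x where "x \<in> ell2" "l2norm x \<le> 1" "y = l2norm (S x)" by blast
  then show "y \<le> C"
    using assms mult_left_le[of "l2norm x" C] by force
qed

lemma opnorm_l2_ge:
  assumes "\<forall>x\<in>ell2. l2norm (S x) \<le> C * l2norm x" and "x \<in> ell2" and "l2norm x \<le> 1"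
  shows "l2norm (S x) \<le> opnorm_l2 S"
  unfolding opnorm_l2_def
proof (rule cSup_upper)
  show "l2norm (S x) \<in> {l2norm (S x) |x. x \<in> ell2 \<and> l2norm x \<le> 1}"
    using assms by blast
  have "l2norm (S z) \<le> \<bar>C\<bar>" if "z \<in> ell2" "l2norm z \<le> 1" for z
  proof -
    have "l2norm (S z) \<le> C * l2norm z" using assms(1) that(1) by blast
    also have "\<dots> \<le> \<bar>C\<bar> * l2norm z"
      using l2norm_nonneg[OF that(1)] by (intro mult_right_mono) auto
    also have "\<dots> \<le> \<bar>C\<bar>"
      using that(2) by (intro mult_left_le) auto
    finally show ?thesis .
  qed
  then show "bdd_above {l2norm (S x) |x. x \<in> ell2 \<and> l2norm x \<le> 1}"
    by (auto intro!: bdd_aboveI)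
qed

primrec wshift_resolvent :: "real \<Rightarrow> real \<Rightarrow> (nat \<Rightarrow> complex) \<Rightarrow> nat \<Rightarrow> complex" where
  "wshift_resolvent t r x 0 = of_real t * x 0"
| "wshift_resolvent t r x (Suc n) =
     of_real t * x (Suc n) + of_real (r * t) * wshift_resolvent t r x n / of_nat (Suc n)"

lemma wshift_resolvent_right_inverse:
  assumes "t \<noteq> 0"
  shows "(\<lambda>n. wshift_resolvent t r x n / of_real t - of_real r * wshift (wshift_resolvent t r x) n) = x"
proof
  fix n show "wshift_resolvent t r x n / of_real t - of_real r * wshift (wshift_resolvent t r x) n = x n"
    using assms by (cases n) (auto simp: wshift_def field_simps)
qed

lemma wshift_resolvent_left_inverse:
  assumes "t \<noteq> 0"
  shows "wshift_resolvent t r (\<lambda>n. x n / of_real t - of_real r * wshift x n) = x"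
proof
  fix n show "wshift_resolvent t r (\<lambda>n. x n / of_real t - of_real r * wshift x n) n = x n"
    using assms by (induction n) (auto simp: wshift_def field_simps)
qed

lemma power_div_fact_step_le:
  fixes x :: real
  assumes "x \<ge> 0" and "j \<le> m"
  shows "x / Suc m * (x ^ (m - j) / fact (m - j)) \<le> x ^ (Suc m - j) / fact (Suc m - j)"
proof -
  have "x / Suc m * (x ^ (m - j) / fact (m - j)) \<le> x / Suc (m - j) * (x ^ (m - j) / fact (m - j))"
    using assms by (intro mult_right_mono divide_left_mono) auto
  also have "\<dots> = x ^ (Suc m - j) / fact (Suc m - j)"
    using assms(2) by (simp add: Suc_diff_le field_simps del: of_nat_Suc)
  finally show ?thesis .
qed

lemma norm_wshift_resolvent_le:
  assumes "t \<ge> 0" and "r \<ge> 0"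
  shows "cmod (wshift_resolvent t r x m) \<le> t * (\<Sum>j\<le>m. (r * t) ^ (m - j) / fact (m - j) * cmod (x j))"
proof (induction m)
  case 0
  then show ?case using assms by (simp add: norm_mult)
next
  case (Suc m)
  have "cmod (wshift_resolvent t r x (Suc m))
      \<le> cmod (of_real t * x (Suc m)) + cmod (of_real (r * t) * wshift_resolvent t r x m / of_nat (Suc m))"
    by (simp only: wshift_resolvent.simps norm_triangle_ineq)
  also have "\<dots> = t * cmod (x (Suc m)) + r * t / Suc m * cmod (wshift_resolvent t r x m)"
    using assms by (simp add: norm_mult norm_divide del: of_nat_Suc)
  also have "\<dots> \<le> t * cmod (x (Suc m))
      + t * (\<Sum>j\<le>m. r * t / Suc m * ((r * t) ^ (m - j) / fact (m - j)) * cmod (x j))"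
    using Suc assms mult_left_mono[OF Suc, of "r * t / Suc m"]
    by (simp add: sum_distrib_left mult_ac del: of_nat_Suc)
  also have "\<dots> \<le> t * cmod (x (Suc m))
      + t * (\<Sum>j\<le>m. (r * t) ^ (Suc m - j) / fact (Suc m - j) * cmod (x j))"
    using assms power_div_fact_step_le[of "r * t"]
    by (intro add_left_mono mult_left_mono sum_mono mult_right_mono) auto
  also have "\<dots> = t * (\<Sum>j\<le>Suc m. (r * t) ^ (Suc m - j) / fact (Suc m - j) * cmod (x j))"
    by (simp add: algebra_simps)
  finally show ?case .
qed

lemma wshift_resolvent_bounded:
  assumes t: "t \<ge> 0" and r: "r \<ge> 0" and x: "x \<in> ell2"
  shows "wshift_resolvent t r x \<in> ell2"
    and "l2norm (wshift_resolvent t r x) \<le> t * exp (r * t) * l2norm x"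
proof -
  define c where "c k = (r * t) ^ k / fact k" for k
  define conv where "conv m = (\<Sum>j\<le>m. c (m - j) * cmod (x j))" for m
  have c_sums: "c sums exp (r * t)"
    using exp_converges[of "r * t"] by (simp add: c_def[abs_def] divide_inverse_commute)
  have x_sq: "summable (\<lambda>j. (cmod (x j))\<^sup>2)"
    using x by (simp add: ell2_def)
  have c_nonneg: "c k \<ge> 0" for k
    using t r by (simp add: c_def)
  note conv_bounds = convolution_l2_bound[OF c_nonneg c_sums x_sq, folded conv_def]
  have dom: "cmod (wshift_resolvent t r x m) \<le> t * conv m" for m
    using norm_wshift_resolvent_le[OF t r] by (simp add: conv_def c_def)
  have tconv_sq: "summable (\<lambda>m. (t * conv m)\<^sup>2)"
    using summable_mult[OF conv_bounds(1), of "t\<^sup>2"] by (simp add: power_mult_distrib)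
  show "wshift_resolvent t r x \<in> ell2"
    by (rule ell2_dominated(1)[OF dom tconv_sq])
  have "l2norm (wshift_resolvent t r x) \<le> sqrt (\<Sum>m. (t * conv m)\<^sup>2)"
    by (rule ell2_dominated(2)[OF dom tconv_sq])
  also have "(\<Sum>m. (t * conv m)\<^sup>2) = t\<^sup>2 * (\<Sum>m. (conv m)\<^sup>2)"
    using suminf_mult[OF conv_bounds(1), of "t\<^sup>2"] by (simp add: power_mult_distrib)
  also have "\<dots> \<le> t\<^sup>2 * ((exp (r * t))\<^sup>2 * (\<Sum>j. (cmod (x j))\<^sup>2))"
    using conv_bounds(2) by (intro mult_left_mono) auto
  also have "sqrt \<dots> = t * exp (r * t) * l2norm x"
    using t by (simp add: l2norm_def real_sqrt_mult)
  finally show "l2norm (wshift_resolvent t r x) \<le> t * exp (r * t) * l2norm x"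
    by - (simp add: real_sqrt_le_mono)
qed

definition ell2_basis :: "nat \<Rightarrow> nat \<Rightarrow> complex" where
  "ell2_basis k n = (if n = k then 1 else 0)"

lemma ell2_basis_sq_sums: "(\<lambda>n. (cmod (ell2_basis k n))\<^sup>2) sums 1"
proof -
  have "(\<lambda>n. (cmod (ell2_basis k n))\<^sup>2) = (\<lambda>n. if n = k then 1 else 0)"
    by (auto simp: ell2_basis_def)
  then show ?thesis
    using sums_single[of k "\<lambda>_. 1::real"] by simp
qed

lemma ell2_basis_in_ell2: "ell2_basis k \<in> ell2"
  using ell2_basis_sq_sums by (auto simp: ell2_def sums_iff)

lemma l2norm_ell2_basis: "l2norm (ell2_basis k) = 1"
  using ell2_basis_sq_sums by (simp add: l2norm_def sums_iff)

lemma wshift_resolvent_basis0: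
  "wshift_resolvent t r (ell2_basis 0) m = of_real (t * (r * t) ^ m / fact m)"
proof (induction m)
  case 0
  then show ?case by (simp add: ell2_basis_def)
next
  case (Suc m)
  have "wshift_resolvent t r (ell2_basis 0) (Suc m)
      = of_real (r * t) * of_real (t * (r * t) ^ m / fact m) / of_nat (Suc m)"
    by (simp only: wshift_resolvent.simps Suc) (simp add: ell2_basis_def)
  also have "\<dots> = of_real (r * t * (t * (r * t) ^ m / fact m) / Suc m)"
    by simp
  also have "r * t * (t * (r * t) ^ m / fact m) / Suc m = t * (r * t) ^ Suc m / fact (Suc m)"
    by (simp add: field_simps del: of_nat_Suc)
  finally show ?case .
qed

lemma l2norm_wshift_resolvent_basis0_ge:
  assumes t: "t > 0" and r: "r > 0"
  shows "sqrt 6 / (pi * r) * (exp (r * t) - 1) \<le> l2norm (wshift_resolvent t r (ell2_basis 0))"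
proof -
  define y where "y = wshift_resolvent t r (ell2_basis 0)"
  define b where "b m = 1 / (1 + real m)" for m
  have y_ell2: "y \<in> ell2"
    unfolding y_def using t r ell2_basis_in_ell2 by (intro wshift_resolvent_bounded(1)) auto
  have b_sq_sums: "(\<lambda>m. (b m)\<^sup>2) sums (pi\<^sup>2 / 6)"
    using inverse_squares_sums by (simp add: b_def[abs_def] power_divide)
  have "(\<lambda>m. t * ((r * t) ^ m / fact (Suc m))) sums (t * ((exp (r * t) - 1) / (r * t)))"
    using t r by (intro sums_mult exp_minus_one_div_sums) auto
  moreover have "cmod (y m) * b m = t * ((r * t) ^ m / fact (Suc m))" for m
  proof -
    have "cmod (y m) = t * (r * t) ^ m / fact m"
      using t r by (simp only: y_def wshift_resolvent_basis0 norm_of_real) simp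
    moreover have "fact (Suc m) = fact m * (1 + real m)"
      by (simp add: algebra_simps)
    ultimately show ?thesis
      by (simp add: b_def)
  qed
  ultimately have "(\<lambda>m. cmod (y m) * b m) sums ((exp (r * t) - 1) / r)"
    using t by simp
  from l2norm_ge_sums[OF y_ell2 sums_summable[OF b_sq_sums] this]
  have "(exp (r * t) - 1) / r \<le> l2norm y * (pi / sqrt 6)"
    using sums_unique[OF b_sq_sums, symmetric] by (simp add: real_sqrt_divide)
  then show ?thesis
    using r by (simp add: y_def field_simps)
qed

theorem lemma3p2:
  fixes t r :: real
  assumes "t > 0" and "r > 0"
  shows "\<exists>S. (\<forall>x\<in>ell2. S x \<in> ell2
                 \<and> S (\<lambda>n. x n / complex_of_real t - complex_of_real r * wshift x n) = x
                 \<and> (\<lambda>n. S x n / complex_of_real t - complex_of_real r * wshift (S x) n) = x)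
          \<and> (\<exists>C. \<forall>x\<in>ell2. l2norm (S x) \<le> C * l2norm x)
          \<and> sqrt 6 / (pi * r) * (exp (r * t) - 1) \<le> opnorm_l2 S
          \<and> opnorm_l2 S \<le> t * exp (r * t)"
proof (intro exI[of _ "wshift_resolvent t r"] conjI)
  have t_nz: "t \<noteq> 0" and nonneg: "t \<ge> 0" "r \<ge> 0"
    using assms by auto
  have bounded: "\<forall>x\<in>ell2. l2norm (wshift_resolvent t r x) \<le> t * exp (r * t) * l2norm x"
    using wshift_resolvent_bounded(2)[OF nonneg] by blast
  show "\<forall>x\<in>ell2. wshift_resolvent t r x \<in> ell2
      \<and> wshift_resolvent t r (\<lambda>n. x n / complex_of_real t - complex_of_real r * wshift x n) = x
      \<and> (\<lambda>n. wshift_resolvent t r x n / complex_of_real t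
            - complex_of_real r * wshift (wshift_resolvent t r x) n) = x"
    using wshift_resolvent_bounded(1)[OF nonneg] wshift_resolvent_left_inverse[OF t_nz]
      wshift_resolvent_right_inverse[OF t_nz] by blast
  show "\<exists>C. \<forall>x\<in>ell2. l2norm (wshift_resolvent t r x) \<le> C * l2norm x"
    using bounded by blast
  show "sqrt 6 / (pi * r) * (exp (r * t) - 1) \<le> opnorm_l2 (wshift_resolvent t r)"
    using l2norm_wshift_resolvent_basis0_ge[OF assms]
      opnorm_l2_ge[OF bounded ell2_basis_in_ell2, of 0] l2norm_ell2_basis[of 0] by simp
  show "opnorm_l2 (wshift_resolvent t r) \<le> t * exp (r * t)"
    using opnorm_l2_le[OF _ bounded] nonneg by simp
qed

end
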